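(* Let $p\ne5$ be an odd prime. Then $$\sum_{k=1}^{[\frac{p+1}4]}\binom{4k-2}{2k-1}\frac1{20^k}\equiv\begin{cases}0\pmod p&\text{if }p\equiv\pm1\pmod5,\\ \mp(-1)^{\frac{p-1}2}\frac12\pmod p&\text{if }p\equiv\pm2\pmod5.\end{cases}$$
   Context: $[x]$ is the greatest integer $\le x$. *)

theory Defs
  imports "HOL-Number_Theory.Number_Theory"
begin

text \<open>Congruence of rationals modulo an integer p: x - y = a/b with p | a and
  b coprime to p (i.e. x - y is a p-integral rational divisible by p).\<close>
definition rat_cong :: "rat \<Rightarrow> rat \<Rightarrow> int \<Rightarrow> bool" where
  "rat_cong x y p \<longleftrightarrow> (\<exists>a b. b \<noteq> 0 \<and> coprime b p \<and> p dvd a \<and> x - y = of_int a / of_int b)"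

end

theory Submission
  imports Defs
begin

text \<open>Put h = (p - 1)/2. Modulo p one has binom(2n, n) \<equiv> binom(h, n) (-4)^n for n \<le> h, and
  this turns the sum into 5^h B/2, where B is the coefficient of \<surd>5 in (5 - 2\<surd>5)^h.
  The coefficient B is computed in the cyclotomic integers \<int>[\<zeta>], \<zeta>^5 = 1, where
  \<surd>5 = \<zeta> + \<zeta>^4 - \<zeta>^2 - \<zeta>^3 and x^p \<equiv> \<sigma>_p(x) (mod p) for the automorphism \<sigma>_p: \<zeta> \<mapsto> \<zeta>^p.
  If p \<equiv> \<plusminus>1 (mod 5), then \<sigma>_p fixes \<surd>5, so (5 - 2\<surd>5)^(p-1) \<equiv> 1; together with the norm
  equation A^2 - 5B^2 = 5^h \<equiv> 1 this forces B \<equiv> 0. If p \<equiv> \<plusminus>2 (mod 5), then 5^h \<equiv> -1, and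
  the square root \<omega> = \<zeta> + \<zeta>^3 - \<zeta>^2 - \<zeta>^4 of 2\<surd>5 - 5 yields B \<equiv> \<plusminus>(-1)^h.\<close>

section \<open>Congruences modulo an integer in a commutative ring\<close>

lemma coprime_prime_int:
  assumes "prime p" "prime q" "p \<noteq> q"
  shows "coprime (int q) (int p)"
  using primes_coprime[OF assms(2,1)] assms(3) by simp

definition ring_cong :: "int \<Rightarrow> 'a::comm_ring_1 \<Rightarrow> 'a \<Rightarrow> bool" where
  "ring_cong m x y \<longleftrightarrow> (\<exists>q. x - y = of_int m * q)"

lemma ring_cong_refl [simp]: "ring_cong m x x"
  unfolding ring_cong_def by (rule exI[of _ 0]) simp

lemma ring_cong_trans [trans]: "ring_cong m x y \<Longrightarrow> ring_cong m y z \<Longrightarrow> ring_cong m x z"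
  unfolding ring_cong_def by (metis diff_add_cancel add_diff_eq distrib_left)

lemma ring_cong_add: "ring_cong m x y \<Longrightarrow> ring_cong m x' y' \<Longrightarrow> ring_cong m (x + x') (y + y')"
  unfolding ring_cong_def by (metis add_diff_add distrib_left)

lemma ring_cong_mult: "ring_cong m x y \<Longrightarrow> ring_cong m x' y' \<Longrightarrow> ring_cong m (x * x') (y * y')"
proof -
  assume "ring_cong m x y" "ring_cong m x' y'"
  then obtain q q' where "x - y = of_int m * q" "x' - y' = of_int m * q'"
    unfolding ring_cong_def by blast
  then have "x * x' - y * y' = of_int m * (q * x' + y * q')"
    by (simp add: algebra_simps)
  then show ?thesis unfolding ring_cong_def by blast
qed

lemma ring_cong_power: "ring_cong m x y \<Longrightarrow> ring_cong m (x ^ n) (y ^ n)"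
  by (induction n) (simp_all add: ring_cong_mult)

lemma ring_cong_of_int: "[a = b] (mod m) \<Longrightarrow> ring_cong m (of_int a) (of_int b)"
  unfolding ring_cong_def cong_iff_dvd_diff by (metis dvdE of_int_diff of_int_mult)

lemma ring_cong_power_prime_add:
  assumes "prime p"
  shows "ring_cong (int p) ((x + y) ^ p) (x ^ p + y ^ p)"
proof -
  have p: "0 < p" using assms prime_gt_0_nat by blast
  define r where "r = (\<Sum>k\<in>{1..<p}. of_nat ((p choose k) div p) * x ^ k * y ^ (p - k))"
  define t where "t k = of_nat (p choose k) * x ^ k * y ^ (p - k)" for k
  have "(x + y) ^ p = (\<Sum>k\<le>p. t k)"
    unfolding t_def by (rule binomial_ring)
  also have "{..p} = insert 0 (insert p {1..<p})"
    using p by auto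
  also have "(\<Sum>k\<in>insert 0 (insert p {1..<p}). t k) = y ^ p + x ^ p + (\<Sum>k\<in>{1..<p}. t k)"
    using p by (simp add: t_def)
  also have "(\<Sum>k\<in>{1..<p}. t k) = of_int (int p) * r"
    unfolding r_def sum_distrib_left of_int_of_nat_eq
  proof (rule sum.cong)
    fix k assume "k \<in> {1..<p}"
    then have "p choose k = p * ((p choose k) div p)"
      using dvd_choose_prime[of k p] assms by auto
    then show "t k = of_nat p * (of_nat ((p choose k) div p) * x ^ k * y ^ (p - k))"
      unfolding t_def by (metis mult.assoc of_nat_mult)
  qed simp
  finally show ?thesis
    unfolding ring_cong_def by (intro exI[of _ r]) (simp add: algebra_simps)
qed

lemma ring_cong_of_nat_power_prime:
  assumes "prime p"
  shows "ring_cong (int p) (of_nat n ^ p) (of_nat n :: 'a::comm_ring_1)"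
proof (induction n)
  case 0
  then show ?case using prime_gt_0_nat[OF assms] by (simp add: power_0_left)
next
  case (Suc n)
  have "ring_cong (int p) ((of_nat n + 1) ^ p) (of_nat n ^ p + (1::'a) ^ p)"
    by (rule ring_cong_power_prime_add[OF assms])
  also have "ring_cong (int p) (of_nat n ^ p + (1::'a) ^ p) (of_nat n + 1)"
    using Suc.IH by (simp add: ring_cong_add)
  finally show ?case by (simp add: add.commute)
qed

lemma ring_cong_of_int_power_prime:
  assumes "prime p"
  shows "ring_cong (int p) (of_int a ^ p) (of_int a :: 'a::comm_ring_1)"
proof -
  define n where "n = nat (a mod int p)"
  have a: "[a = int n] (mod int p)"
    using prime_gt_0_nat[OF assms] by (simp add: n_def cong_def)
  have "ring_cong (int p) (of_int a ^ p) (of_nat n ^ p :: 'a)"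
    using ring_cong_power[OF ring_cong_of_int[OF a]] by simp
  also have "ring_cong (int p) (of_nat n ^ p) (of_nat n :: 'a)"
    by (rule ring_cong_of_nat_power_prime[OF assms])
  also have "ring_cong (int p) (of_nat n) (of_int a :: 'a)"
    using ring_cong_of_int[OF cong_sym[OF a]] by simp
  finally show ?thesis .
qed

lemma ring_cong_power_prime_sum_list:
  assumes "prime p"
  shows "ring_cong (int p) ((\<Sum>(c, x)\<leftarrow>cs. of_int c * x) ^ p)
                          (\<Sum>(c, x)\<leftarrow>cs. of_int c * x ^ p :: 'a::comm_ring_1)"
proof (induction cs)
  case Nil
  then show ?case using prime_gt_0_nat[OF assms] by (simp add: power_0_left)
next
  case (Cons cx cs)
  obtain c x where cx: "cx = (c, x)" by fastforce
  define s :: 'a where "s = (\<Sum>(c, x)\<leftarrow>cs. of_int c * x)"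
  have "ring_cong (int p) ((of_int c * x + s) ^ p) ((of_int c * x) ^ p + s ^ p)"
    by (rule ring_cong_power_prime_add[OF assms])
  also have "(of_int c * x) ^ p = of_int c ^ p * x ^ p"
    by (simp add: power_mult_distrib)
  also have "ring_cong (int p) (of_int c ^ p * x ^ p + s ^ p)
                               (of_int c * x ^ p + (\<Sum>(c, x)\<leftarrow>cs. of_int c * x ^ p))"
    unfolding s_def
    by (intro ring_cong_add ring_cong_mult ring_cong_of_int_power_prime[OF assms] ring_cong_refl Cons.IH)
  finally show ?case by (simp add: cx s_def)
qed

section \<open>The cyclotomic integers \<int>[\<zeta>] with \<zeta>^5 = 1\<close>

text \<open>Cyc5 a0 a1 a2 a3 stands for a0 + a1 \<zeta> + a2 \<zeta>^2 + a3 \<zeta>^3; products are reduced with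
  \<zeta>^5 = 1 and \<zeta>^4 = -1 - \<zeta> - \<zeta>^2 - \<zeta>^3.\<close>

datatype cyc5 = Cyc5 int int int int

instantiation cyc5 :: comm_ring_1
begin

definition "0 = Cyc5 0 0 0 0"
definition "1 = Cyc5 1 0 0 0"

fun plus_cyc5 :: "cyc5 \<Rightarrow> cyc5 \<Rightarrow> cyc5" where
  "Cyc5 a0 a1 a2 a3 + Cyc5 b0 b1 b2 b3 = Cyc5 (a0 + b0) (a1 + b1) (a2 + b2) (a3 + b3)"

fun minus_cyc5 :: "cyc5 \<Rightarrow> cyc5 \<Rightarrow> cyc5" where
  "Cyc5 a0 a1 a2 a3 - Cyc5 b0 b1 b2 b3 = Cyc5 (a0 - b0) (a1 - b1) (a2 - b2) (a3 - b3)"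

fun uminus_cyc5 :: "cyc5 \<Rightarrow> cyc5" where
  "- Cyc5 a0 a1 a2 a3 = Cyc5 (- a0) (- a1) (- a2) (- a3)"

fun times_cyc5 :: "cyc5 \<Rightarrow> cyc5 \<Rightarrow> cyc5" where
  "Cyc5 a0 a1 a2 a3 * Cyc5 b0 b1 b2 b3 =
    (let s = a1 * b3 + a2 * b2 + a3 * b1 in
     Cyc5 (a0 * b0 + a2 * b3 + a3 * b2 - s) (a0 * b1 + a1 * b0 + a3 * b3 - s)
          (a0 * b2 + a1 * b1 + a2 * b0 - s) (a0 * b3 + a1 * b2 + a2 * b1 + a3 * b0 - s))"

instance
proof
  fix a b c :: cyc5
  show "a * b * c = a * (b * c)" by (cases a; cases b; cases c) (simp add: Let_def algebra_simps)
  show "a * b = b * a" by (cases a; cases b) (simp add: Let_def algebra_simps)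
  show "1 * a = a" by (cases a) (simp add: one_cyc5_def)
  show "(a + b) * c = a * c + b * c" by (cases a; cases b; cases c) (simp add: Let_def algebra_simps)
  show "a + b + c = a + (b + c)" by (cases a; cases b; cases c) simp
  show "a + b = b + a" by (cases a; cases b) simp
  show "0 + a = a" by (cases a) (simp add: zero_cyc5_def)
  show "- a + a = 0" by (cases a) (simp add: zero_cyc5_def)
  show "a - b = a + - b" by (cases a; cases b) simp
  show "(0::cyc5) \<noteq> 1" by (simp add: zero_cyc5_def one_cyc5_def)
qed

end

lemma of_int_cyc5: "of_int n = Cyc5 n 0 0 0"
proof -
  have "of_nat m = Cyc5 (int m) 0 0 0" for m
    by (induction m) (simp_all add: zero_cyc5_def one_cyc5_def)
  then show ?thesis by (cases n) (simp_all add: one_cyc5_def)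
qed

lemma numeral_cyc5: "numeral n = Cyc5 (numeral n) 0 0 0"
  using of_int_cyc5[of "numeral n"] by simp

lemma ring_cong_Cyc5_imp_dvd:
  assumes "ring_cong m (Cyc5 a0 a1 a2 a3) (Cyc5 b0 b1 b2 b3)"
  shows "m dvd a0 - b0" "m dvd a1 - b1" "m dvd a2 - b2" "m dvd a3 - b3"
proof -
  obtain q where "Cyc5 a0 a1 a2 a3 - Cyc5 b0 b1 b2 b3 = of_int m * q"
    using assms unfolding ring_cong_def by blast
  then show "m dvd a0 - b0" "m dvd a1 - b1" "m dvd a2 - b2" "m dvd a3 - b3"
    by (cases q; simp add: of_int_cyc5)+
qed

definition zeta :: cyc5 where "zeta = Cyc5 0 1 0 0"

lemma zeta_power_mod5: "zeta ^ n = zeta ^ (n mod 5)"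
proof -
  have "zeta ^ 5 = 1"
    by (simp add: zeta_def eval_nat_numeral one_cyc5_def)
  then have "zeta ^ (5 * (n div 5) + n mod 5) = zeta ^ (n mod 5)"
    by (simp only: power_add power_mult) simp
  then show ?thesis by simp
qed

lemma ring_cong_power_prime_cyc5:
  assumes "prime p"
  shows "ring_cong (int p) (Cyc5 a0 a1 a2 a3 ^ p)
     (of_int a0 + of_int a1 * zeta ^ p + of_int a2 * (zeta ^ p) ^ 2 + of_int a3 * (zeta ^ p) ^ 3)"
proof -
  define cs where "cs = [(a0, 1), (a1, zeta), (a2, zeta ^ 2), (a3, zeta ^ 3)]"
  have "Cyc5 a0 a1 a2 a3 = (\<Sum>(c, x)\<leftarrow>cs. of_int c * x)"
    by (simp add: cs_def zeta_def of_int_cyc5 eval_nat_numeral Let_def)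
  with ring_cong_power_prime_sum_list[OF assms, of cs] show ?thesis
    by (simp add: cs_def power_mult[symmetric] ac_simps)
qed

text \<open>The Gauss sum \<zeta> + \<zeta>^4 - \<zeta>^2 - \<zeta>^3 and the element \<zeta> + \<zeta>^3 - \<zeta>^2 - \<zeta>^4.\<close>

definition sqrt5 :: cyc5 where "sqrt5 = Cyc5 (-1) 0 (-2) (-2)"

definition omega :: cyc5 where "omega = Cyc5 1 2 0 2"

lemma sqrt5_square: "sqrt5 * sqrt5 = 5"
  by (simp add: sqrt5_def numeral_cyc5)

lemma omega_square: "omega * omega = 2 * sqrt5 - 5"
  by (simp add: omega_def sqrt5_def numeral_cyc5)

lemma Cyc5_sqrt5: "of_int a + of_int b * sqrt5 = Cyc5 (a - b) 0 (- 2 * b) (- 2 * b)"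
  by (simp add: sqrt5_def of_int_cyc5)

lemma mult_sqrt5:
  "(of_int a + of_int b * sqrt5) * (of_int c + of_int d * sqrt5)
     = of_int (a * c + 5 * b * d) + of_int (a * d + b * c) * sqrt5"
  unfolding Cyc5_sqrt5 by (simp add: Let_def algebra_simps)

lemma sqrt5_coeffs_eq_iff:
  "of_int a + of_int b * sqrt5 = of_int a' + of_int b' * sqrt5 \<longleftrightarrow> a = a' \<and> b = b'"
  by (auto simp: Cyc5_sqrt5)

lemma ring_cong_sqrt5_iff:
  assumes "coprime 2 m"
  shows "ring_cong m (of_int a + of_int b * sqrt5) (of_int a' + of_int b' * sqrt5)
           \<longleftrightarrow> [a = a'] (mod m) \<and> [b = b'] (mod m)"
proof
  assume "ring_cong m (of_int a + of_int b * sqrt5) (of_int a' + of_int b' * sqrt5)"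
  then have a: "m dvd (a - b) - (a' - b')" and b: "m dvd - 2 * b - - 2 * b'"
    unfolding Cyc5_sqrt5 by (auto dest: ring_cong_Cyc5_imp_dvd)
  have "- 2 * b - - 2 * b' = - (2 * (b - b'))" by simp
  with b assms have "m dvd b - b'"
    by (metis coprime_commute coprime_dvd_mult_right_iff dvd_minus_iff)
  moreover have "a - a' = ((a - b) - (a' - b')) + (b - b')" by simp
  ultimately show "[a = a'] (mod m) \<and> [b = b'] (mod m)"
    using a by (metis cong_iff_dvd_diff dvd_add)
next
  assume "[a = a'] (mod m) \<and> [b = b'] (mod m)"
  then show "ring_cong m (of_int a + of_int b * sqrt5) (of_int a' + of_int b' * sqrt5)"
    by (blast intro: ring_cong_add ring_cong_mult ring_cong_of_int ring_cong_refl)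
qed

lemma sqrt5_frobenius:
  assumes "prime p"
  shows "p mod 5 \<in> {1, 4} \<Longrightarrow> ring_cong (int p) (sqrt5 ^ p) sqrt5"
    and "p mod 5 \<in> {2, 3} \<Longrightarrow> ring_cong (int p) (sqrt5 ^ p) (- sqrt5)"
proof -
  define r where "r = p mod 5"
  have "ring_cong (int p) (sqrt5 ^ p)
          (of_int (-1) + of_int 0 * zeta ^ r + of_int (-2) * (zeta ^ r) ^ 2 + of_int (-2) * (zeta ^ r) ^ 3)"
    using ring_cong_power_prime_cyc5[OF assms] unfolding sqrt5_def r_def zeta_power_mod5[of p] .
  then show "p mod 5 \<in> {1, 4} \<Longrightarrow> ring_cong (int p) (sqrt5 ^ p) sqrt5"
    and "p mod 5 \<in> {2, 3} \<Longrightarrow> ring_cong (int p) (sqrt5 ^ p) (- sqrt5)"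
    unfolding r_def[symmetric]
    by (auto simp: zeta_def sqrt5_def eval_nat_numeral of_int_cyc5 one_cyc5_def)
qed

lemma omega_frobenius:
  assumes "prime p"
  shows "p mod 5 = 2 \<Longrightarrow> ring_cong (int p) (omega ^ Suc p) (- sqrt5)"
    and "p mod 5 = 3 \<Longrightarrow> ring_cong (int p) (omega ^ Suc p) sqrt5"
proof -
  define r where "r = p mod 5"
  have "ring_cong (int p) (omega ^ p * omega)
          ((of_int 1 + of_int 2 * zeta ^ r + of_int 0 * (zeta ^ r) ^ 2 + of_int 2 * (zeta ^ r) ^ 3) * omega)"
    using ring_cong_mult[OF ring_cong_power_prime_cyc5[OF assms] ring_cong_refl]
    unfolding omega_def r_def zeta_power_mod5[of p] .
  then show "p mod 5 = 2 \<Longrightarrow> ring_cong (int p) (omega ^ Suc p) (- sqrt5)"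
    and "p mod 5 = 3 \<Longrightarrow> ring_cong (int p) (omega ^ Suc p) sqrt5"
    unfolding r_def[symmetric] power_Suc2
    by (auto simp: zeta_def sqrt5_def omega_def eval_nat_numeral of_int_cyc5 one_cyc5_def)
qed

section \<open>The coefficient of \<surd>5 in (5 - 2\<surd>5)^h modulo p\<close>

definition sqrt5_pow_fst :: "int \<Rightarrow> int \<Rightarrow> nat \<Rightarrow> int" where
  "sqrt5_pow_fst a c h =
     (\<Sum>n\<le>h. if even n then int (h choose n) * a ^ (h - n) * c ^ n * 5 ^ (n div 2) else 0)"

definition sqrt5_pow_snd :: "int \<Rightarrow> int \<Rightarrow> nat \<Rightarrow> int" where
  "sqrt5_pow_snd a c h =
     (\<Sum>n\<le>h. if odd n then int (h choose n) * a ^ (h - n) * c ^ n * 5 ^ (n div 2) else 0)"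

lemma sqrt5_power: "sqrt5 ^ n = of_int (5 ^ (n div 2)) * (if even n then 1 else sqrt5)"
proof -
  have "sqrt5 ^ n = sqrt5 ^ (2 * (n div 2) + n mod 2)"
    by simp
  also have "\<dots> = (sqrt5 * sqrt5) ^ (n div 2) * sqrt5 ^ (n mod 2)"
    by (simp only: power_add power_mult power2_eq_square)
  finally have "sqrt5 ^ n = 5 ^ (n div 2) * sqrt5 ^ (n mod 2)"
    by (simp add: sqrt5_square)
  then show ?thesis
    by (cases "even n") (simp_all add: even_iff_mod_2_eq_zero odd_iff_mod_2_eq_one)
qed

lemma sqrt5_pow_eq:
  "(of_int a + of_int c * sqrt5) ^ h
     = of_int (sqrt5_pow_fst a c h) + of_int (sqrt5_pow_snd a c h) * sqrt5"
proof -
  have "(of_int a + of_int c * sqrt5) ^ h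
      = (\<Sum>n\<le>h. of_nat (h choose n) * (of_int c * sqrt5) ^ n * of_int a ^ (h - n))"
    by (subst add.commute) (rule binomial_ring)
  also have "\<dots> = (\<Sum>n\<le>h.
      of_int (if even n then int (h choose n) * a ^ (h - n) * c ^ n * 5 ^ (n div 2) else 0)
    + of_int (if odd n then int (h choose n) * a ^ (h - n) * c ^ n * 5 ^ (n div 2) else 0) * sqrt5)"
    by (rule sum.cong) (simp_all add: power_mult_distrib sqrt5_power algebra_simps)
  finally show ?thesis
    unfolding sqrt5_pow_fst_def sqrt5_pow_snd_def sum.distrib of_int_sum sum_distrib_right .
qed

lemma sqrt5_pow_fst_uminus: "sqrt5_pow_fst a (- c) h = sqrt5_pow_fst a c h"
  unfolding sqrt5_pow_fst_def by (rule sum.cong) auto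

lemma sqrt5_pow_snd_uminus: "sqrt5_pow_snd a (- c) h = - sqrt5_pow_snd a c h"
  unfolding sqrt5_pow_snd_def sum_negf[symmetric] by (rule sum.cong) auto

lemma sqrt5_pow_norm:
  "sqrt5_pow_fst a c h ^ 2 - 5 * sqrt5_pow_snd a c h ^ 2 = (a ^ 2 - 5 * c ^ 2) ^ h"
proof -
  define x y where "x = sqrt5_pow_fst a c h" and "y = sqrt5_pow_snd a c h"
  have "of_int ((a ^ 2 - 5 * c ^ 2) ^ h) + of_int 0 * sqrt5
      = ((of_int a + of_int c * sqrt5) * (of_int a + of_int (- c) * sqrt5)) ^ h"
    unfolding mult_sqrt5 by (simp add: power2_eq_square mult.assoc)
  also have "\<dots> = (of_int x + of_int y * sqrt5) * (of_int x + of_int (- y) * sqrt5)"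
    unfolding power_mult_distrib sqrt5_pow_eq x_def y_def sqrt5_pow_fst_uminus sqrt5_pow_snd_uminus ..
  also have "\<dots> = of_int (x ^ 2 - 5 * y ^ 2) + of_int 0 * sqrt5"
    unfolding mult_sqrt5 by (simp add: power2_eq_square mult.assoc)
  finally show ?thesis
    unfolding sqrt5_coeffs_eq_iff x_def y_def by simp
qed

lemma five_power_half_cong:
  assumes "prime p" "p = 2 * h + 1"
  shows "p mod 5 \<in> {1, 4} \<Longrightarrow> [5 ^ h = 1] (mod int p)"
    and "p mod 5 \<in> {2, 3} \<Longrightarrow> [5 ^ h = - 1] (mod int p)"
proof -
  have cop2: "coprime 2 (int p)"
    using coprime_prime_int[OF assms(1) two_is_prime_nat] assms(2) by auto
  have "sqrt5 ^ p = of_int 0 + of_int (5 ^ h) * sqrt5"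
    using sqrt5_power[of p] assms(2) by simp
  then show "p mod 5 \<in> {1, 4} \<Longrightarrow> [5 ^ h = 1] (mod int p)"
    and "p mod 5 \<in> {2, 3} \<Longrightarrow> [5 ^ h = - 1] (mod int p)"
    using sqrt5_frobenius[OF assms(1)]
      ring_cong_sqrt5_iff[OF cop2, of 0 "5 ^ h" 0 1] ring_cong_sqrt5_iff[OF cop2, of 0 "5 ^ h" 0 "-1"]
    by simp_all
qed

lemma ring_cong_power_prime_sqrt5_split:
  assumes "prime p" "p mod 5 \<in> {1, 4}"
  shows "ring_cong (int p) ((of_int a + of_int c * sqrt5) ^ p) (of_int a + of_int c * sqrt5)"
proof -
  have "ring_cong (int p) ((of_int a + of_int c * sqrt5) ^ p) (of_int a + of_int c * sqrt5 ^ p)"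
    using ring_cong_power_prime_sum_list[OF assms(1), of "[(a, 1), (c, sqrt5)]"] by simp
  also have "ring_cong (int p) (of_int a + of_int c * sqrt5 ^ p) (of_int a + of_int c * sqrt5)"
    using sqrt5_frobenius(1)[OF assms] by (intro ring_cong_add ring_cong_mult ring_cong_refl)
  finally show ?thesis .
qed

lemma sqrt5_pow_snd_cong_split:
  assumes "prime p" "p = 2 * h + 1" "p mod 5 \<in> {1, 4}"
  shows "[sqrt5_pow_snd 5 (-2) h = 0] (mod int p)"
proof -
  define A B where "A = sqrt5_pow_fst 5 (-2) h" and "B = sqrt5_pow_snd 5 (-2) h"
  define z :: cyc5 where "z = of_int 5 + of_int (-2) * sqrt5"
  define z' :: cyc5 where "z' = of_int 5 + of_int 2 * sqrt5"
  have cop2: "coprime 2 (int p)"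
    using coprime_prime_int[OF assms(1) two_is_prime_nat] assms(2) by auto
  have cop5: "coprime 5 (int p)"
    using coprime_prime_int[OF assms(1), of 5] assms(3) by (cases "p = 5") auto
  have "ring_cong (int p) (z ^ p * z') (z * z')"
    unfolding z_def by (intro ring_cong_mult ring_cong_power_prime_sqrt5_split[OF assms(1,3)] ring_cong_refl)
  moreover have zz': "z * z' = of_int 5 + of_int 0 * sqrt5"
    unfolding z_def z'_def mult_sqrt5 by simp
  moreover have "z ^ p * z' = of_int (5 * (A ^ 2 + 5 * B ^ 2)) + of_int (10 * A * B) * sqrt5"
  proof -
    have "z ^ p * z' = z ^ h * z ^ h * (z * z')"
      by (simp add: assms(2) power_add power_mult power2_eq_square ac_simps)
    also have "z ^ h = of_int A + of_int B * sqrt5"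
      unfolding z_def A_def B_def by (rule sqrt5_pow_eq)
    finally show ?thesis
      unfolding zz' mult_sqrt5 by (simp add: power2_eq_square algebra_simps)
  qed
  ultimately have "ring_cong (int p) (of_int (5 * (A ^ 2 + 5 * B ^ 2)) + of_int (10 * A * B) * sqrt5)
                                    (of_int 5 + of_int 0 * sqrt5)"
    by (simp only:)
  then have "[5 * (A ^ 2 + 5 * B ^ 2) = 5 * 1] (mod int p)"
    unfolding ring_cong_sqrt5_iff[OF cop2] by simp
  then have "[A ^ 2 + 5 * B ^ 2 = 1] (mod int p)"
    using cong_mult_lcancel[OF cop5] by blast
  moreover have "[A ^ 2 - 5 * B ^ 2 = 1] (mod int p)"
    using sqrt5_pow_norm[of 5 "-2" h] five_power_half_cong(1)[OF assms] by (simp add: A_def B_def)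
  ultimately have "[(A ^ 2 + 5 * B ^ 2) - (A ^ 2 - 5 * B ^ 2) = 1 - 1] (mod int p)"
    by (rule cong_diff)
  then have "int p dvd 10 * B ^ 2"
    by (simp add: cong_0_iff)
  moreover have "coprime (int p) (2 * 5)"
    unfolding coprime_mult_right_iff using cop2 cop5 by (metis coprime_commute)
  ultimately have "int p dvd B ^ 2"
    using coprime_dvd_mult_right_iff by fastforce
  then show ?thesis
    using assms(1) by (simp add: B_def cong_0_iff prime_dvd_power_iff)
qed

text \<open>For p \<equiv> \<plusminus>2 (mod 5) the Frobenius acts on \<int>[\<surd>5] as conjugation, which determines
  (5 - 2\<surd>5)^h only up to sign; the sign comes from \<omega>^(p+1) = (\<omega>^2)^(h+1) = (2\<surd>5 - 5)^(h+1).\<close>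

lemma ring_cong_five_minus_two_sqrt5_power_inert:
  assumes "prime p" "p = 2 * h + 1" "p mod 5 \<in> {2, 3}"
  shows "ring_cong (int p) ((of_int 5 + of_int (-2) * sqrt5) ^ Suc h)
                           (of_int ((-1) ^ h * (if p mod 5 = 2 then 1 else -1)) * sqrt5)"
proof -
  define z :: cyc5 where "z = of_int 5 + of_int (-2) * sqrt5"
  define \<sigma> :: int where "\<sigma> = (-1) ^ h"
  define e :: int where "e = \<sigma> * (if p mod 5 = 2 then 1 else -1)"
  have "Suc p = 2 * Suc h"
    using assms(2) by simp
  then have "omega ^ Suc p = (omega * omega) ^ Suc h"
    by (simp only: power_mult power2_eq_square)
  also have "omega * omega = - z"
    unfolding omega_square z_def by simp
  also have "(- z) ^ Suc h = - of_int \<sigma> * z ^ Suc h"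
    by (simp add: \<sigma>_def power_minus[of z])
  finally have "ring_cong (int p) (- of_int \<sigma> * z ^ Suc h) (- of_int \<sigma> * (of_int e * sqrt5))"
    using omega_frobenius[OF assms(1)] assms(3) by (auto simp: e_def \<sigma>_def)
  then have "ring_cong (int p) ((- of_int \<sigma> * - of_int \<sigma>) * z ^ Suc h)
                               ((- of_int \<sigma> * - of_int \<sigma>) * (of_int e * sqrt5))"
    unfolding mult.assoc by (rule ring_cong_mult[OF ring_cong_refl])
  moreover have "- of_int \<sigma> * - of_int \<sigma> = (1::cyc5)"
    by (simp add: \<sigma>_def flip: of_int_mult power_add)
  ultimately have "ring_cong (int p) (z ^ Suc h) (of_int e * sqrt5)"
    by simp
  then show ?thesis
    unfolding z_def e_def \<sigma>_def .
qed

lemma sqrt5_pow_snd_cong_inert: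
  assumes "prime p" "p = 2 * h + 1" "p mod 5 \<in> {2, 3}"
  shows "[sqrt5_pow_snd 5 (-2) h = (-1) ^ h * (if p mod 5 = 2 then 1 else -1)] (mod int p)"
proof -
  define A B where "A = sqrt5_pow_fst 5 (-2) h" and "B = sqrt5_pow_snd 5 (-2) h"
  define e :: int where "e = (-1) ^ h * (if p mod 5 = 2 then 1 else -1)"
  have cop2: "coprime 2 (int p)"
    using coprime_prime_int[OF assms(1) two_is_prime_nat] assms(2) by auto
  have cop5: "coprime 5 (int p)"
    using coprime_prime_int[OF assms(1), of 5] assms(3) by (cases "p = 5") auto
  have "(of_int 5 + of_int (-2) * sqrt5) ^ Suc h
      = of_int (5 * A - 10 * B) + of_int (5 * B - 2 * A) * sqrt5"
    unfolding power_Suc2 A_def B_def sqrt5_pow_eq mult_sqrt5 by (simp add: algebra_simps)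
  then have "ring_cong (int p) (of_int (5 * A - 10 * B) + of_int (5 * B - 2 * A) * sqrt5)
                               (of_int 0 + of_int e * sqrt5)"
    using ring_cong_five_minus_two_sqrt5_power_inert[OF assms] by (simp add: e_def)
  then have c1: "[5 * (A - 2 * B) = 5 * 0] (mod int p)" and c2: "[5 * B - 2 * A = e] (mod int p)"
    unfolding ring_cong_sqrt5_iff[OF cop2] by (simp_all add: algebra_simps)
  have "int p dvd A - 2 * B"
    using c1 unfolding cong_mult_lcancel[OF cop5] by (simp add: cong_0_iff)
  moreover have "int p dvd (5 * B - 2 * A) - e"
    using c2 by (simp add: cong_iff_dvd_diff)
  ultimately have "int p dvd ((5 * B - 2 * A) - e) + 2 * (A - 2 * B)"
    by (blast intro: dvd_add dvd_mult)
  also have "((5 * B - 2 * A) - e) + 2 * (A - 2 * B) = B - e"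
    by simp
  finally show ?thesis
    by (simp add: cong_iff_dvd_diff B_def e_def)
qed

section \<open>The binomial sum\<close>

lemma central_binomial_cong:
  assumes "prime p" "p = 2 * h + 1" "n \<le> h"
  shows "[int (2 * n choose n) = int (h choose n) * (-4) ^ n] (mod int p)"
  using assms(3)
proof (induction n)
  case 0
  then show ?case by simp
next
  case (Suc n)
  have n: "n < h" using Suc.prems by simp
  have rec_central: "Suc n * (2 * Suc n choose Suc n) = 2 * (2 * n + 1) * (2 * n choose n)"
    by (metis Suc_eq_plus1 Suc_times_binomial Suc_times_binomial_add add_Suc add_Suc_right
        mult.assoc mult_2)
  have rec_h: "Suc n * (h choose Suc n) = (h - n) * (h choose n)"
    using binomial_absorb_comp binomial_absorption by presburger
  have "int (Suc n) * int (2 * Suc n choose Suc n) = int (2 * (2 * n + 1) * (2 * n choose n))"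
    by (simp only: of_nat_mult[symmetric] rec_central)
  also have "\<dots> = 2 * (2 * int n + 1) * int (2 * n choose n)"
    by (simp add: algebra_simps)
  also have "[\<dots> = 2 * (2 * int n + 1) * (int (h choose n) * (-4) ^ n)] (mod int p)"
    using Suc.IH n by (intro cong_scalar_left) simp
  also have "2 * (2 * int n + 1) * (int (h choose n) * (-4) ^ n)
      = int (Suc n) * (int (h choose Suc n) * (-4) ^ Suc n) + int p * (2 * int (h choose n) * (-4) ^ n)"
  proof -
    have "int (Suc n) * int (h choose Suc n) = (int h - int n) * int (h choose n)"
      using n by (simp only: of_nat_mult[symmetric] rec_h) (simp add: of_nat_diff)
    then have "int (Suc n) * (int (h choose Suc n) * (-4) ^ Suc n)
        = (int h - int n) * int (h choose n) * ((-4) * (-4) ^ n)"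
      by (simp only: power_Suc mult.assoc[symmetric])
    then show ?thesis
      by (simp add: assms(2) algebra_simps)
  qed
  also have "[\<dots> = int (Suc n) * (int (h choose Suc n) * (-4) ^ Suc n)] (mod int p)"
    by (simp add: cong_iff_dvd_diff)
  finally have "[int (Suc n) * int (2 * Suc n choose Suc n)
      = int (Suc n) * (int (h choose Suc n) * (-4) ^ Suc n)] (mod int p)" .
  moreover have "coprime (int (Suc n)) (int p)"
  proof -
    have "\<not> p dvd Suc n"
      using n assms(2) by (auto dest: dvd_imp_le)
    then have "\<not> int p dvd int (Suc n)"
      by presburger
    then show ?thesis
      using prime_imp_coprime[of "int p" "int (Suc n)"] assms(1) by (simp add: coprime_commute)
  qed
  ultimately show ?case
    using cong_mult_lcancel by blast
qed

lemma sum_odd_atMost: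
  fixes f :: "nat \<Rightarrow> 'a::comm_monoid_add"
  shows "(\<Sum>n\<le>h. if odd n then f n else 0) = (\<Sum>k = 1..(h + 1) div 2. f (2 * k - 1))"
proof -
  have "{n \<in> {..h}. odd n} = (\<lambda>k. 2 * k - 1) ` {1..(h + 1) div 2}"
  proof (intro Set.set_eqI iffI)
    fix n assume "n \<in> {n \<in> {..h}. odd n}"
    then have "n = 2 * ((n + 1) div 2) - 1" "(n + 1) div 2 \<in> {1..(h + 1) div 2}"
      by (auto elim!: oddE)
    then show "n \<in> (\<lambda>k. 2 * k - 1) ` {1..(h + 1) div 2}" by blast
  qed auto
  moreover have "inj_on (\<lambda>k. 2 * k - 1) {1..(h + 1) div 2}"
    by (auto simp: inj_on_def)
  ultimately show ?thesis
    by (simp add: sum.inter_filter[symmetric] sum.reindex)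
qed

lemma binomial_sum_cong_sqrt5_pow_snd:
  assumes "prime p" "p = 2 * h + 1" "K = (h + 1) div 2"
  shows "[2 * 5 ^ (h - K) * (\<Sum>k = 1..K. int ((4 * k - 2) choose (2 * k - 1)) * 20 ^ (K - k))
          = 4 ^ K * sqrt5_pow_snd 5 (-2) h] (mod int p)"
proof -
  have Kh: "K \<le> h"
    using assms(3) by linarith
  define g where "g n = int (h choose n) * 5 ^ (h - n) * (-2) ^ n * 5 ^ (n div 2)" for n
  have "sqrt5_pow_snd 5 (-2) h = (\<Sum>k = 1..K. g (2 * k - 1))"
    unfolding sqrt5_pow_snd_def g_def assms(3) by (rule sum_odd_atMost)
  then have "4 ^ K * sqrt5_pow_snd 5 (-2) h = (\<Sum>k = 1..K. 4 ^ K * g (2 * k - 1))"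
    by (simp add: sum_distrib_left)
  moreover have "[2 * 5 ^ (h - K) * (\<Sum>k = 1..K. int ((4 * k - 2) choose (2 * k - 1)) * 20 ^ (K - k))
      = (\<Sum>k = 1..K. 4 ^ K * g (2 * k - 1))] (mod int p)"
    unfolding sum_distrib_left
  proof (rule cong_sum)
    fix k assume k: "k \<in> {1..K}"
    define n where "n = 2 * k - 1"
    have n: "odd n" "n \<le> h" "n div 2 = k - 1" "4 * k - 2 = 2 * n"
      using k assms(3) by (auto simp: n_def)
    have pow: "(2::int) * 5 ^ (h - K) * 4 ^ n * 20 ^ (K - k) = 4 ^ K * 5 ^ (h - n) * 2 ^ n * 5 ^ (k - 1)"
    proof -
      have four: "(4::int) ^ m = 2 ^ (2 * m)" for m
        by (simp add: power_mult)
      have twenty: "(20::int) ^ m = 2 ^ (2 * m) * 5 ^ m" for m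
        by (simp add: power_mult power_mult_distrib[symmetric])
      have e2: "1 + 2 * n + 2 * (K - k) = 2 * K + n" and e5: "h - K + (K - k) = h - n + (k - 1)"
        using k n(2) Kh by (auto simp: n_def)
      have "(2::int) * 5 ^ (h - K) * 4 ^ n * 20 ^ (K - k) = 2 ^ (1 + 2 * n + 2 * (K - k)) * 5 ^ (h - K + (K - k))"
        unfolding four twenty power_add by (simp add: algebra_simps)
      also have "\<dots> = 2 ^ (2 * K + n) * 5 ^ (h - n + (k - 1))"
        unfolding e2 e5 ..
      also have "\<dots> = 4 ^ K * 5 ^ (h - n) * 2 ^ n * 5 ^ (k - 1)"
        unfolding four power_add by (simp add: algebra_simps)
      finally show ?thesis .
    qed
    have "[2 * 5 ^ (h - K) * (int ((4 * k - 2) choose (2 * k - 1)) * 20 ^ (K - k))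
        = 2 * 5 ^ (h - K) * (int (h choose n) * (-4) ^ n * 20 ^ (K - k))] (mod int p)"
      using central_binomial_cong[OF assms(1,2) n(2)] unfolding n(4) n_def[symmetric]
      by (intro cong_scalar_left cong_scalar_right)
    also have "2 * 5 ^ (h - K) * (int (h choose n) * (-4) ^ n * 20 ^ (K - k)) = 4 ^ K * g n"
      using pow n(1,3) by (simp add: g_def power_minus_odd algebra_simps)
    finally show "[2 * 5 ^ (h - K) * (int ((4 * k - 2) choose (2 * k - 1)) * 20 ^ (K - k))
        = 4 ^ K * g (2 * k - 1)] (mod int p)"
      by (simp add: n_def)
  qed
  ultimately show ?thesis
    by simp
qed

lemma sum_divide_powers:
  fixes c :: "'a::field"
  assumes "c \<noteq> 0"
  shows "(\<Sum>k = 1..K. x k / c ^ k) = (\<Sum>k = 1..K. x k * c ^ (K - k)) / c ^ K"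
  unfolding sum_divide_distrib
proof (rule sum.cong)
  fix k assume "k \<in> {1..K}"
  then have "c ^ K = c ^ (K - k) * c ^ k"
    by (simp flip: power_add)
  then show "x k / c ^ k = x k * c ^ (K - k) / c ^ K"
    using assms by simp
qed simp

lemma rat_cong_of_int_divide:
  assumes "c \<noteq> 0" "d \<noteq> 0" "coprime c m" "coprime d m" "[d * t = c * e] (mod m)"
  shows "rat_cong (of_int t / of_int c) (of_int e / of_int d) m"
  unfolding rat_cong_def
proof (intro exI conjI)
  show "c * d \<noteq> 0" "coprime (c * d) m"
    using assms(1-4) by simp_all
  show "m dvd d * t - c * e"
    using assms(5) by (simp add: cong_iff_dvd_diff)
  show "of_int t / of_int c - of_int e / of_int d = of_int (d * t - c * e) / (of_int (c * d) :: rat)"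
    using assms(1,2) by (simp add: field_simps)
qed

lemma rat_cong_binomial_sum:
  assumes "prime p" "odd p" "p \<noteq> 5"
    and B: "[sqrt5_pow_snd 5 (-2) ((p - 1) div 2) * 5 ^ ((p - 1) div 2) = e] (mod int p)"
  shows "rat_cong (\<Sum>k = 1..(p + 1) div 4. of_nat ((4 * k - 2) choose (2 * k - 1)) / (20::rat) ^ k)
                  (of_int e / 2) (int p)"
proof -
  define h K where "h = (p - 1) div 2" and "K = (p + 1) div 4"
  define T where "T = (\<Sum>k = 1..K. int ((4 * k - 2) choose (2 * k - 1)) * 20 ^ (K - k))"
  have p: "p = 2 * h + 1" and K: "K = (h + 1) div 2" and Kh: "K \<le> h"
    using assms(2) by (auto simp: h_def K_def elim!: oddE)
  have cop2: "coprime 2 (int p)"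
    using coprime_prime_int[OF assms(1) two_is_prime_nat] assms(2) by auto
  have cop5: "coprime 5 (int p)"
    using coprime_prime_int[OF assms(1), of 5] assms(3) by simp
  have "coprime (2 * 2 * 5) (int p)"
    unfolding coprime_mult_left_iff using cop2 cop5 by blast
  then have cop20: "coprime (20 ^ K) (int p)"
    by simp
  have "[5 ^ (p - 1) = 1] (mod p)"
    using fermat_theorem[OF assms(1), of 5] primes_dvd_imp_eq[OF assms(1), of 5] assms(3) by auto
  then have "[5 ^ (p - 1) = 1] (mod int p)"
    using cong_int_iff[of "5 ^ (p - 1)" 1 p] by simp
  moreover have "p - 1 = 2 * h"
    using p by simp
  ultimately have fermat: "[5 ^ (2 * h) = 1] (mod int p)"
    by simp
  have "[2 * T = 5 ^ (2 * h) * (2 * T)] (mod int p)"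
    using cong_scalar_right[OF cong_sym[OF fermat]] by simp
  also have "5 ^ (2 * h) * (2 * T) = 5 ^ (h + K) * (5 ^ (h - K) * (2 * T))"
    using Kh by (simp add: mult.assoc[symmetric] flip: power_add)
  also have "[\<dots> = 5 ^ (h + K) * (4 ^ K * sqrt5_pow_snd 5 (-2) h)] (mod int p)"
    using binomial_sum_cong_sqrt5_pow_snd[OF assms(1) p K]
    by (intro cong_scalar_left) (simp add: T_def ac_simps)
  also have "5 ^ (h + K) * (4 ^ K * sqrt5_pow_snd 5 (-2) h) = 20 ^ K * (sqrt5_pow_snd 5 (-2) h * 5 ^ h)"
    by (simp add: power_add power_mult_distrib[symmetric] ac_simps)
  also have "[\<dots> = 20 ^ K * e] (mod int p)"
    using B by (intro cong_scalar_left) (simp add: h_def)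
  finally have "rat_cong (of_int T / of_int (20 ^ K)) (of_int e / of_int 2) (int p)"
    using cop2 cop20 by (intro rat_cong_of_int_divide) simp_all
  moreover have "(\<Sum>k = 1..K. of_nat ((4 * k - 2) choose (2 * k - 1)) / (20::rat) ^ k)
      = of_int T / of_int (20 ^ K)"
    by (subst sum_divide_powers) (simp_all add: T_def)
  ultimately show ?thesis
    by (simp add: K_def)
qed

theorem corollary3p7:
  fixes p :: nat
  assumes "prime p" and "odd p" and "p \<noteq> 5"
  defines "S \<equiv> (\<Sum>k = 1..(p + 1) div 4. of_nat ((4*k - 2) choose (2*k - 1)) / (20::rat) ^ k)"
  shows "([p = 1] (mod 5) \<or> [p = 4] (mod 5) \<longrightarrow> rat_cong S 0 (int p))
       \<and> ([p = 2] (mod 5) \<longrightarrow> rat_cong S (- ((-1) ^ ((p - 1) div 2) / 2)) (int p))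
       \<and> ([p = 3] (mod 5) \<longrightarrow> rat_cong S ((-1) ^ ((p - 1) div 2) / 2) (int p))"
proof -
  define h where "h = (p - 1) div 2"
  define B where "B = sqrt5_pow_snd 5 (-2) h"
  have p: "p = 2 * h + 1"
    using assms(2) by (auto simp: h_def elim!: oddE)
  have S: "rat_cong S (of_int e / 2) (int p)" if "[B * 5 ^ h = e] (mod int p)" for e
    unfolding S_def using rat_cong_binomial_sum[OF assms(1-3)] that by (simp only: B_def h_def)
  have "rat_cong S 0 (int p)" if "p mod 5 \<in> {1, 4}"
    using S[of 0] cong_scalar_right[OF sqrt5_pow_snd_cong_split[OF assms(1) p that]]
    by (simp add: B_def)
  moreover have "rat_cong S (of_int (- ((-1) ^ h * d)) / 2) (int p)"
    if "p mod 5 \<in> {2, 3}" and "d = (if p mod 5 = 2 then 1 else -1)" for d :: int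
  proof (rule S)
    show "[B * 5 ^ h = - ((-1) ^ h * d)] (mod int p)"
      using cong_mult[OF sqrt5_pow_snd_cong_inert[OF assms(1) p that(1)]
                         five_power_half_cong(2)[OF assms(1) p that(1)]] that(2)
      by (simp add: B_def)
  qed
  ultimately show ?thesis
    unfolding cong_def h_def by (force simp: mult.commute[of _ "-1"])
qed

end
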